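(* Let $\Omega\subset\mathbb{R}^d$ be a bounded Lipschitz domain, $\beta>0$, $g:[0,\infty)\to[0,\infty)$ continuous and strictly increasing with $g(0)=0$, $0<\alpha\le1$, $\delta,M_1,M_2>0$, and $R:=\operatorname{diam}(\Omega)$. Let $\varrho=\varrho(\Omega,\delta,M_1,M_2,\alpha)>0$ be the radius of guaranteed local injectivity described in the context. Then there exists $\bar\varepsilon>0$ depending only on $d,\Omega,\delta,\alpha,M_1,M_2,g$ such that the following holds: if $y\in C^{1,\alpha}(\Omega;\mathbb{R}^d)$ satisfies $\det\nabla y\ge\delta$, $|\nabla y|\le M_1$ on $\Omega$, $\|\nabla y\|_{C^\alpha(\Omega)}\le M_2$, if $0<\varepsilon_2\le\bar\varepsilon$, and if $$|y(x_1)-y(x_2)|>R\varepsilon_2\quad\text{for all }x_1,x_2\in\Omega\text{ with }|x_1-x_2|>\tfrac{\varrho}{2},$$ then $E^{CN}_{\varepsilon_2}(y)=0$.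
   Context: For $\varepsilon_2>0$, $E^{CN}_{\varepsilon_2}(y):=\frac{1}{\varepsilon_2^\beta}\int_{\Omega\times\Omega}\frac{1}{\varepsilon_2^d}\big[g(|\tilde x-x|)-g\big(\tfrac{1}{\varepsilon_2}|y(\tilde x)-y(x)|\big)\big]^+\,d(x,\tilde x)$, with $[a]^+=\max\{0,a\}$. The radius $\varrho>0$ depends only on $\Omega,\delta,M_1,M_2,\alpha$ and has the property that every $y\in C^{1,\alpha}(\Omega;\mathbb{R}^d)$ satisfying the three bounds is injective on $B_\varrho(\bar x)\cap\Omega$ for every $\bar x\in\bar\Omega$, with $\frac12\frac{\delta}{M_1^{d-1}}|x_1-x_2|\le|y(x_1)-y(x_2)|\le M_1\sqrt{1+L^2}|x_1-x_2|$ there ($L$ bounding the local Lipschitz constants of $\partial\Omega$). *)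

theory Defs
  imports "HOL-Analysis.Analysis"
begin

text \<open>Locally near every boundary point p, after a rigid rotation T, Omega is the subgraph
  {z_k < h(z)} of an L-Lipschitz function h not depending on the coordinate z_k
  (i.e. a Lipschitz function of the remaining d-1 coordinates).\<close>
definition lipschitz_domain :: "(real^'n) set \<Rightarrow> real \<Rightarrow> bool" where
  "lipschitz_domain \<Omega> L \<longleftrightarrow>
     open \<Omega> \<and> connected \<Omega> \<and> bounded \<Omega> \<and> \<Omega> \<noteq> {} \<and> L \<ge> 0 \<and>
     (\<forall>p\<in>frontier \<Omega>. \<exists>r>0. \<exists>T::real^'n \<Rightarrow> real^'n. \<exists>k::'n. \<exists>h::real^'n \<Rightarrow> real.
        orthogonal_transformation T \<and>
        L-lipschitz_on UNIV h \<and>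
        (\<forall>z. h z = h (\<chi> i. if i = k then 0 else z $ i)) \<and>
        \<Omega> \<inter> ball p r = {x \<in> ball p r. T (x - p) $ k < h (T (x - p))})"

definition holder_norm :: "(real^'n) set \<Rightarrow> real \<Rightarrow> (real^'n \<Rightarrow> 'b::real_normed_vector) \<Rightarrow> ereal" where
  "holder_norm \<Omega> \<alpha> f =
     (SUP x\<in>\<Omega>. ereal (norm (f x))) +
     (SUP p\<in>{(x, x'). x \<in> \<Omega> \<and> x' \<in> \<Omega> \<and> x \<noteq> x'}.
        ereal (norm (f (fst p) - f (snd p)) / dist (fst p) (snd p) powr \<alpha>))"

text \<open>y in C^{1,alpha}(Omega;R^d) with gradient Dy (Jacobian matrix), satisfying
  det grad y >= delta, |grad y| <= M1 (Frobenius norm), ||grad y||_{C^alpha} <= M2.\<close>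
definition admissible ::
  "(real^'n) set \<Rightarrow> real \<Rightarrow> real \<Rightarrow> real \<Rightarrow> real \<Rightarrow>
   (real^'n \<Rightarrow> real^'n) \<Rightarrow> (real^'n \<Rightarrow> real^'n^'n) \<Rightarrow> bool" where
  "admissible \<Omega> \<alpha> \<delta> M1 M2 y Dy \<longleftrightarrow>
     (\<forall>x\<in>\<Omega>. (y has_derivative (\<lambda>v. Dy x *v v)) (at x)) \<and>
     continuous_on \<Omega> Dy \<and>
     (\<forall>x\<in>\<Omega>. det (Dy x) \<ge> \<delta> \<and> norm (Dy x) \<le> M1) \<and>
     holder_norm \<Omega> \<alpha> Dy \<le> ereal M2"

definition inj_radius ::
  "(real^'n) set \<Rightarrow> real \<Rightarrow> real \<Rightarrow> real \<Rightarrow> real \<Rightarrow> real \<Rightarrow> real \<Rightarrow> bool" where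
  "inj_radius \<Omega> L \<alpha> \<delta> M1 M2 \<rho> \<longleftrightarrow> \<rho> > 0 \<and>
     (\<forall>y Dy. admissible \<Omega> \<alpha> \<delta> M1 M2 y Dy \<longrightarrow>
        (\<forall>xb\<in>closure \<Omega>.
           inj_on y (ball xb \<rho> \<inter> \<Omega>) \<and>
           (\<forall>x1\<in>ball xb \<rho> \<inter> \<Omega>. \<forall>x2\<in>ball xb \<rho> \<inter> \<Omega>.
              (1/2) * (\<delta> / M1 ^ (CARD('n) - 1)) * dist x1 x2 \<le> dist (y x1) (y x2) \<and>
              dist (y x1) (y x2) \<le> M1 * sqrt (1 + L\<^sup>2) * dist x1 x2)))"

definition E_CN ::
  "real \<Rightarrow> (real \<Rightarrow> real) \<Rightarrow> (real^'n) set \<Rightarrow> real \<Rightarrow> (real^'n \<Rightarrow> real^'n) \<Rightarrow> ennreal" where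
  "E_CN \<beta> g \<Omega> \<epsilon> y =
     ennreal (1 / \<epsilon> powr \<beta>) *
     (\<integral>\<^sup>+ p \<in> \<Omega> \<times> \<Omega>.
        ennreal ((1 / \<epsilon> ^ CARD('n)) *
          max 0 (g (dist (snd p) (fst p)) - g ((1/\<epsilon>) * dist (y (snd p)) (y (fst p)))))
      \<partial>lborel)"

end

theory Submission
  imports Defs
begin

text \<open>Let \<open>c = \<delta> / (2 M1^(d-1))\<close> be the lower bi-Lipschitz constant guaranteed on balls of
  radius \<open>\<rho>\<close>, and take \<open>\<epsilon>b = c\<close>. For \<open>\<epsilon>2 \<le> c\<close> the rescaled deformation \<open>y / \<epsilon>2\<close> does not
  shrink any distance in \<Omega>: for \<open>|x1 - x2| \<le> \<rho>/2\<close> by the local lower bound, and otherwise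
  because \<open>|y x1 - y x2| > R \<epsilon>2 \<ge> |x1 - x2| \<epsilon>2\<close>. As g is increasing, the integrand of
  \<open>E_CN\<close> then vanishes identically.\<close>

lemma E_CN_eq_0_if_expanding:
  fixes \<Omega> :: "(real^'n) set" and y :: "real^'n \<Rightarrow> real^'n"
  assumes g: "mono_on {0..} g" and "0 < \<epsilon>"
    and expanding: "\<And>x1 x2. x1 \<in> \<Omega> \<Longrightarrow> x2 \<in> \<Omega> \<Longrightarrow> \<epsilon> * dist x1 x2 \<le> dist (y x1) (y x2)"
  shows "E_CN \<beta> g \<Omega> \<epsilon> y = 0"
proof -
  have integrand_zero:
    "ennreal ((1 / \<epsilon> ^ CARD('n)) *
        max 0 (g (dist (snd p) (fst p)) - g ((1/\<epsilon>) * dist (y (snd p)) (y (fst p)))))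
      * indicator (\<Omega> \<times> \<Omega>) p = 0" for p
  proof (cases "p \<in> \<Omega> \<times> \<Omega>")
    case True
    then have "dist (snd p) (fst p) \<le> (1/\<epsilon>) * dist (y (snd p)) (y (fst p))"
      using expanding \<open>0 < \<epsilon>\<close> by (auto simp: mem_Times_iff field_simps)
    then have "g (dist (snd p) (fst p)) \<le> g ((1/\<epsilon>) * dist (y (snd p)) (y (fst p)))"
      using mono_onD[OF g] \<open>0 < \<epsilon>\<close> by simp
    then show ?thesis by simp
  qed simp
  show ?thesis
    unfolding E_CN_def by (simp only: integrand_zero) simp
qed

lemma dist_image_lower_bound_if_near_and_far:
  fixes y :: "'a::metric_space \<Rightarrow> 'b::metric_space"
  assumes "bounded S" and "0 \<le> e" and "e \<le> c"
    and near: "\<And>x1 x2. x1 \<in> S \<Longrightarrow> x2 \<in> S \<Longrightarrow> dist x1 x2 \<le> r \<Longrightarrow>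
                 c * dist x1 x2 \<le> dist (y x1) (y x2)"
    and far: "\<And>x1 x2. x1 \<in> S \<Longrightarrow> x2 \<in> S \<Longrightarrow> dist x1 x2 > r \<Longrightarrow>
                 dist (y x1) (y x2) > diameter S * e"
    and "x1 \<in> S" and "x2 \<in> S"
  shows "e * dist x1 x2 \<le> dist (y x1) (y x2)"
proof (cases "dist x1 x2 \<le> r")
  case True
  have "e * dist x1 x2 \<le> c * dist x1 x2"
    using \<open>e \<le> c\<close> by (simp add: mult_right_mono)
  also have "\<dots> \<le> dist (y x1) (y x2)"
    using near True \<open>x1 \<in> S\<close> \<open>x2 \<in> S\<close> by blast
  finally show ?thesis .
next
  case False
  have "e * dist x1 x2 \<le> diameter S * e"
    using diameter_bounded_bound[OF \<open>bounded S\<close> \<open>x1 \<in> S\<close> \<open>x2 \<in> S\<close>] \<open>0 \<le> e\<close>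
    by (simp add: mult.commute mult_left_mono)
  also have "\<dots> < dist (y x1) (y x2)"
    using far False \<open>x1 \<in> S\<close> \<open>x2 \<in> S\<close> by simp
  finally show ?thesis by simp
qed

lemma inj_radius_dist_lower_bound:
  fixes \<Omega> :: "(real^'n) set"
  assumes "inj_radius \<Omega> L \<alpha> \<delta> M1 M2 \<rho>" and "admissible \<Omega> \<alpha> \<delta> M1 M2 y Dy"
    and "x1 \<in> \<Omega>" and "x2 \<in> \<Omega>" and "dist x1 x2 < \<rho>"
  shows "(1/2) * (\<delta> / M1 ^ (CARD('n) - 1)) * dist x1 x2 \<le> dist (y x1) (y x2)"
proof -
  have "x1 \<in> closure \<Omega>" "x1 \<in> ball x1 \<rho> \<inter> \<Omega>" "x2 \<in> ball x1 \<rho> \<inter> \<Omega>"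
    using assms(1,3-5) closure_subset by (auto simp: inj_radius_def)
  then show ?thesis
    using assms(1,2) unfolding inj_radius_def by blast
qed

theorem corollary3p7:
  fixes \<Omega> :: "(real^'n) set" and L \<alpha> \<delta> M1 M2 \<rho> :: real and g :: "real \<Rightarrow> real"
  assumes "lipschitz_domain \<Omega> L"
    and "continuous_on {0..} g" and "strict_mono_on {0..} g" and "g 0 = 0"
    and "\<forall>t\<ge>0. g t \<ge> 0"
    and "0 < \<alpha>" and "\<alpha> \<le> 1" and "\<delta> > 0" and "M1 > 0" and "M2 > 0"
    and "inj_radius \<Omega> L \<alpha> \<delta> M1 M2 \<rho>"
  shows "\<exists>\<epsilon>b>0. \<forall>\<beta>>0. \<forall>y Dy \<epsilon>2.
     admissible \<Omega> \<alpha> \<delta> M1 M2 y Dy \<longrightarrow> 0 < \<epsilon>2 \<longrightarrow> \<epsilon>2 \<le> \<epsilon>b \<longrightarrow>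
     (\<forall>x1\<in>\<Omega>. \<forall>x2\<in>\<Omega>. dist x1 x2 > \<rho> / 2 \<longrightarrow> dist (y x1) (y x2) > diameter \<Omega> * \<epsilon>2) \<longrightarrow>
     E_CN \<beta> g \<Omega> \<epsilon>2 y = 0"
proof -
  define c where "c = (1/2) * (\<delta> / M1 ^ (CARD('n) - 1))"
  have "c > 0" using \<open>\<delta> > 0\<close> \<open>M1 > 0\<close> by (simp add: c_def)
  have "bounded \<Omega>" using assms(1) by (simp add: lipschitz_domain_def)
  have "\<rho> > 0" using assms(11) by (simp add: inj_radius_def)
  show ?thesis
  proof (intro exI[of _ c] conjI allI impI \<open>c > 0\<close>)
    fix \<beta> :: real and y Dy and \<epsilon>2 :: real
    assume adm: "admissible \<Omega> \<alpha> \<delta> M1 M2 y Dy" and "0 < \<epsilon>2" and "\<epsilon>2 \<le> c"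
      and far: "\<forall>x1\<in>\<Omega>. \<forall>x2\<in>\<Omega>. dist x1 x2 > \<rho> / 2 \<longrightarrow> dist (y x1) (y x2) > diameter \<Omega> * \<epsilon>2"
    have near: "c * dist x1 x2 \<le> dist (y x1) (y x2)"
      if "x1 \<in> \<Omega>" "x2 \<in> \<Omega>" "dist x1 x2 \<le> \<rho> / 2" for x1 x2
      using inj_radius_dist_lower_bound[OF assms(11) adm that(1,2)] that(3) \<open>\<rho> > 0\<close>
      by (simp add: c_def)
    have "\<epsilon>2 * dist x1 x2 \<le> dist (y x1) (y x2)" if "x1 \<in> \<Omega>" "x2 \<in> \<Omega>" for x1 x2
      using dist_image_lower_bound_if_near_and_far[where r = "\<rho> / 2", OF \<open>bounded \<Omega>\<close> _
          \<open>\<epsilon>2 \<le> c\<close> near] far that \<open>0 < \<epsilon>2\<close>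
      by auto
    then show "E_CN \<beta> g \<Omega> \<epsilon>2 y = 0"
      using E_CN_eq_0_if_expanding[OF strict_mono_on_imp_mono_on[OF assms(3)] \<open>0 < \<epsilon>2\<close>]
      by blast
  qed
qed

end
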